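(* Fix $k_0\ge 0$ and $c_0\in L^1([-\tau,0);\mathbb{R}_+)$. (i) The admissible set $\mathcal{C}(k_0,c_0)$ is nonempty if and only if $c^m\in\mathcal C(k_0,c_0)$, i.e. if and only if $k^M(t)\ge0$ for every $t\ge0$. (ii) If $\lambda_0\ge A-\delta$, then for every $c_0\in L^1([-\tau,0);\mathbb{R}_+)$ with $c_0>0$ on a set of positive Lebesgue measure, $\mathcal{C}(k_0,c_0)=\emptyset$.
   Context: Fixed parameters: $A>0$, $\delta>0$, $\varepsilon>0$, $\eta>0$, $\tau>0$. For $c\in L^1_{loc}([0,\infty);\mathbb{R}_+)$, $\widetilde c$ denotes its concatenation with $c_0$ ($\widetilde c=c_0$ on $[-\tau,0)$, $\widetilde c=c$ on $[0,\infty)$); the habit is $h(t)=\varepsilon\int_{t-\tau}^{t}\widetilde c(u)e^{\eta(u-t)}du$; the capital path is $k(t)=k_0e^{(A-\delta)t}-\int_0^te^{(A-\delta)(t-u)}c(u)du$. The admissible set is $\mathcal C(k_0,c_0)=\{c\in L^1_{loc}([0,\infty);\mathbb{R}_+): k(t)\ge0\ \forall t\ge0,\ c(t)\ge h(t)\ge0 \text{ for a.e. } t\ge0\}$. $c^m$ is the unique solution of $c^m(t)=\varepsilon\int_{t-\tau}^{t}\widetilde c^{\,m}(u)e^{\eta(u-t)}du$, $t\ge0$ (with $\widetilde c^{\,m}$ the concatenation of $c_0$ and $c^m$), and $k^M(t)=e^{(A-\delta)t}[k_0-\int_0^tc^m(u)e^{-(A-\delta)u}du]$ is its capital path. $\lambda_0$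 is the unique real root of $1=\varepsilon\int_{-\tau}^0e^{(\lambda+\eta)u}du$. *)

theory Defs
  imports "HOL-Analysis.Analysis"
begin

definition L1_nonneg_init :: "real \<Rightarrow> (real \<Rightarrow> real) \<Rightarrow> bool" where
  "L1_nonneg_init \<tau> c0 \<longleftrightarrow>
     set_integrable lborel {-\<tau>..<0} c0 \<and> (AE u in lborel. u \<in> {-\<tau>..<0} \<longrightarrow> 0 \<le> c0 u)"

definition L1loc :: "(real \<Rightarrow> real) \<Rightarrow> bool" where
  "L1loc c \<longleftrightarrow> (\<forall>T\<ge>0. set_integrable lborel {0..T} c)"

definition L1loc_nonneg :: "(real \<Rightarrow> real) \<Rightarrow> bool" where
  "L1loc_nonneg c \<longleftrightarrow> L1loc c \<and> (AE t in lborel. 0 \<le> t \<longrightarrow> 0 \<le> c t)"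

definition concat :: "(real \<Rightarrow> real) \<Rightarrow> (real \<Rightarrow> real) \<Rightarrow> real \<Rightarrow> real" where
  "concat c0 c u = (if u < 0 then c0 u else c u)"

definition habit :: "real \<Rightarrow> real \<Rightarrow> real \<Rightarrow> (real \<Rightarrow> real) \<Rightarrow> (real \<Rightarrow> real) \<Rightarrow> real \<Rightarrow> real" where
  "habit \<epsilon> \<eta> \<tau> c0 c t =
     \<epsilon> * (LBINT u:{t-\<tau>..t}. concat c0 c u * exp (\<eta> * (u - t)))"

definition capital :: "real \<Rightarrow> real \<Rightarrow> real \<Rightarrow> (real \<Rightarrow> real) \<Rightarrow> real \<Rightarrow> real" where
  "capital A \<delta> k0 c t =
     k0 * exp ((A - \<delta>) * t) - (LBINT u:{0..t}. exp ((A - \<delta>) * (t - u)) * c u)"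

definition admissible ::
  "real \<Rightarrow> real \<Rightarrow> real \<Rightarrow> real \<Rightarrow> real \<Rightarrow> real \<Rightarrow> (real \<Rightarrow> real) \<Rightarrow> (real \<Rightarrow> real) set" where
  "admissible A \<delta> \<epsilon> \<eta> \<tau> k0 c0 =
     {c. L1loc_nonneg c \<and> (\<forall>t\<ge>0. capital A \<delta> k0 c t \<ge> 0) \<and>
         (AE t in lborel. 0 \<le> t \<longrightarrow>
             habit \<epsilon> \<eta> \<tau> c0 c t \<le> c t \<and> 0 \<le> habit \<epsilon> \<eta> \<tau> c0 c t)}"

definition is_cm :: "real \<Rightarrow> real \<Rightarrow> real \<Rightarrow> (real \<Rightarrow> real) \<Rightarrow> (real \<Rightarrow> real) \<Rightarrow> bool" where
  "is_cm \<epsilon> \<eta> \<tau> c0 cm \<longleftrightarrow> L1loc cm \<and> (\<forall>t\<ge>0. cm t = habit \<epsilon> \<eta> \<tau> c0 cm t)"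

definition kM :: "real \<Rightarrow> real \<Rightarrow> real \<Rightarrow> (real \<Rightarrow> real) \<Rightarrow> real \<Rightarrow> real" where
  "kM A \<delta> k0 cm t =
     exp ((A - \<delta>) * t) * (k0 - (LBINT u:{0..t}. cm u * exp (- (A - \<delta>) * u)))"

definition lambda0 :: "real \<Rightarrow> real \<Rightarrow> real \<Rightarrow> real" where
  "lambda0 \<epsilon> \<eta> \<tau> = (THE l. 1 = \<epsilon> * (LBINT u:{-\<tau>..0}. exp ((l + \<eta>) * u)))"

end

theory Submission
  imports Defs
begin

text \<open>
  The maintenance consumption \<open>cm\<close> equals its own habit, while every admissible \<open>c\<close> lies
  above its habit. The habit is a Volterra operator whose kernel \<open>\<epsilon> exp (\<eta> (u - t)) \<le> \<epsilon>\<close>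
  lives on a window of length \<open>\<tau>\<close>, so a Gronwall iteration on \<open>max 0 (cm - c)\<close> gives
  \<open>cm \<le> c\<close>: the maintenance path is the least admissible consumption. As capital is antitone
  in consumption, the admissible set is nonempty iff \<open>cm\<close> keeps its capital \<open>kM\<close> nonnegative.

  For (ii), positive mass of \<open>c0\<close> bounds every admissible \<open>c\<close> from below on \<open>[0, \<tau>]\<close>.
  The exponential \<open>a exp (\<lambda>\<^sub>0 t)\<close> equals its own habit from time \<open>\<tau>\<close> on, so the same
  comparison gives \<open>c t \<ge> a exp (\<lambda>\<^sub>0 t)\<close>; when \<open>\<lambda>\<^sub>0 \<ge> A - \<delta>\<close> such consumption outruns
  the return on capital and drives capital negative.
\<close>

section \<open>Set integrals on the real line\<close>

lemma set_integrable_mult_bounded: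
  fixes f g :: "real \<Rightarrow> real"
  assumes f: "set_integrable lborel S f" and g: "g \<in> borel_measurable lborel"
    and bound: "\<And>x. x \<in> S \<Longrightarrow> \<bar>g x\<bar> \<le> B"
  shows "set_integrable lborel S (\<lambda>x. f x * g x)"
  unfolding set_integrable_def
proof (rule Bochner_Integration.integrable_bound)
  show "integrable lborel (\<lambda>x. B * (indicator S x *\<^sub>R f x))"
    using f by (simp add: set_integrable_def)
  have "(\<lambda>x. (indicator S x *\<^sub>R f x) * g x) \<in> borel_measurable lborel"
    using borel_measurable_integrable f g unfolding set_integrable_def by measurable
  then show "(\<lambda>x. indicator S x *\<^sub>R (f x * g x)) \<in> borel_measurable lborel"
    by (simp add: mult.assoc)
  show "AE x in lborel. norm (indicator S x *\<^sub>R (f x * g x)) \<le> norm (B * (indicator S x *\<^sub>R f x))"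
  proof (intro AE_I2)
    fix x
    show "norm (indicator S x *\<^sub>R (f x * g x)) \<le> norm (B * (indicator S x *\<^sub>R f x))"
    proof (cases "x \<in> S")
      case True
      then have "\<bar>f x\<bar> * \<bar>g x\<bar> \<le> \<bar>f x\<bar> * \<bar>B\<bar>"
        using bound by (intro mult_left_mono) force+
      then show ?thesis using True by (simp add: abs_mult mult.commute)
    qed simp
  qed
qed

lemma set_integrable_mult_exp_decay:
  fixes f :: "real \<Rightarrow> real"
  assumes "set_integrable lborel S f" "\<And>u. u \<in> S \<Longrightarrow> u \<le> t" "0 \<le> \<eta>"
  shows "set_integrable lborel S (\<lambda>u. f u * exp (\<eta> * (u - t)))"
  using assms by (intro set_integrable_mult_bounded[where B = 1])
    (auto simp: mult_nonneg_nonpos)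

lemma set_integrable_max_zero:
  fixes f :: "real \<Rightarrow> real"
  assumes "set_integrable M S f"
  shows "set_integrable M S (\<lambda>x. max 0 (f x))"
proof -
  have "integrable M (\<lambda>x. max 0 (indicator S x *\<^sub>R f x))"
    using assms unfolding set_integrable_def by (intro integrable_max) auto
  moreover have "(\<lambda>x. indicator S x *\<^sub>R max 0 (f x)) = (\<lambda>x. max 0 (indicator S x *\<^sub>R f x))"
    by (auto split: split_indicator)
  ultimately show ?thesis unfolding set_integrable_def by simp
qed

lemma set_integral_nonneg_AE:
  fixes f :: "real \<Rightarrow> real"
  assumes "AE x in M. x \<in> S \<longrightarrow> 0 \<le> f x"
  shows "0 \<le> (LINT x:S|M. f x)"
  unfolding set_lebesgue_integral_def using assms
  by (intro integral_nonneg_AE) (auto elim!: eventually_mono split: split_indicator)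

lemma set_integral_mono_subset:
  fixes f :: "real \<Rightarrow> real"
  assumes "set_integrable M T f" "S \<subseteq> T" "S \<in> sets M" "AE x in M. x \<in> T \<longrightarrow> 0 \<le> f x"
  shows "(LINT x:S|M. f x) \<le> (LINT x:T|M. f x)"
proof -
  have "set_integrable M S f" using assms set_integrable_subset by blast
  then show ?thesis using assms unfolding set_integrable_def set_lebesgue_integral_def
    by (intro integral_mono_AE) (auto elim!: eventually_mono split: split_indicator)
qed

lemma set_integral_pos:
  fixes f :: "real \<Rightarrow> real"
  assumes f: "set_integrable lborel S f" and nonneg: "AE x in lborel. x \<in> S \<longrightarrow> 0 \<le> f x"
    and pos: "emeasure lborel {x \<in> S. 0 < f x} > 0"
  shows "0 < (LBINT x:S. f x)"
proof (rule ccontr)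
  define g where "g = (\<lambda>x. indicator S x *\<^sub>R f x)"
  have g: "integrable lborel g" using f by (simp add: g_def set_integrable_def)
  assume "\<not> 0 < (LBINT x:S. f x)"
  then have "integral\<^sup>L lborel g = 0"
    using set_integral_nonneg_AE[OF nonneg] by (simp add: g_def set_lebesgue_integral_def)
  then have "AE x in lborel. g x = 0"
    using g nonneg by (subst integral_nonneg_eq_0_iff_AE[symmetric])
      (auto elim!: eventually_mono simp: g_def split: split_indicator)
  then have "AE x in lborel. \<not> 0 < g x"
    by (auto elim!: eventually_mono)
  moreover have "{x. 0 < g x} \<in> sets lborel"
    using borel_measurable_integrable[OF g] by measurable
  ultimately have "{x. 0 < g x} \<in> null_sets lborel"
    by (simp add: AE_iff_null_sets)
  moreover have "{x \<in> S. 0 < f x} = {x. 0 < g x}"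
    by (auto simp: g_def split: split_indicator)
  ultimately have "{x \<in> S. 0 < f x} \<in> null_sets lborel" by simp
  then show False using pos by auto
qed

lemma emeasure_pos_inter_atLeast:
  fixes S :: "real set"
  assumes S: "S \<subseteq> {a..}" and pos: "0 < emeasure lborel S"
  shows "\<exists>s>a. 0 < emeasure lborel (S \<inter> {s..})"
proof (rule ccontr)
  assume no_mass: "\<not> (\<exists>s>a. 0 < emeasure lborel (S \<inter> {s..}))"
  have S_sets: "S \<in> sets lborel" using pos emeasure_notin_sets by fastforce
  have "S \<inter> {s..} \<in> null_sets lborel" if "a < s" for s
    using no_mass S_sets that by (force simp: null_sets_def not_less)
  then have "S \<inter> {a + 1 / Suc n..} \<in> null_sets lborel" for n
    by simp
  then have "{a} \<union> (\<Union>n. S \<inter> {a + 1 / Suc n..}) \<in> null_sets lborel"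
    by (intro null_sets.Un null_sets_UN) auto
  moreover have "S \<subseteq> {a} \<union> (\<Union>n. S \<inter> {a + 1 / Suc n..})"
  proof
    fix u assume u: "u \<in> S"
    show "u \<in> {a} \<union> (\<Union>n. S \<inter> {a + 1 / Suc n..})"
    proof (cases "u = a")
      case False
      then have "0 < u - a" using u S by force
      then obtain n :: nat where "1 / Suc n < u - a"
        using nat_approx_posE by blast
      then have "u \<in> S \<inter> {a + 1 / Suc n..}" using u by simp
      then show ?thesis by blast
    qed simp
  qed
  ultimately have "S \<in> null_sets lborel" using S_sets null_sets_subset by blast
  then show False using pos by auto
qed

lemma set_integral_mult_exp_lower:
  fixes f :: "real \<Rightarrow> real"
  assumes f: "set_integrable lborel S f" and nonneg: "AE u in lborel. u \<in> S \<longrightarrow> 0 \<le> f u"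
    and S: "S \<subseteq> {t-\<tau>..t}" and \<eta>: "0 \<le> \<eta>"
  shows "exp (- \<eta> * \<tau>) * (LBINT u:S. f u) \<le> (LBINT u:S. f u * exp (\<eta> * (u - t)))"
proof -
  have "exp (- \<eta> * \<tau>) * f u \<le> f u * exp (\<eta> * (u - t))" if "u \<in> S" "0 \<le> f u" for u
  proof -
    have "\<eta> * (- \<tau>) \<le> \<eta> * (u - t)" using S that \<eta> by (intro mult_left_mono) auto
    then show ?thesis using that by (simp add: mult.commute mult_left_mono)
  qed
  then have "(LBINT u:S. exp (- \<eta> * \<tau>) * f u) \<le> (LBINT u:S. f u * exp (\<eta> * (u - t)))"
    using f S \<eta> nonneg
    by (intro set_integral_mono_AE set_integrable_mult_exp_decay) (auto elim!: eventually_mono)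
  then show ?thesis by simp
qed

lemma L1loc_set_integrable: "L1loc c \<Longrightarrow> 0 \<le> a \<Longrightarrow> set_integrable lborel {a..b} c"
  unfolding L1loc_def by (cases "a \<le> b") (auto intro: set_integrable_subset[of _ "{0..b}"])

section \<open>Gronwall's inequality\<close>

lemma gronwall_AE_zero:
  fixes n :: "real \<Rightarrow> real"
  assumes nonneg: "\<And>t. 0 \<le> n t" and int: "\<And>T. set_integrable lborel {0..T} n" and K: "0 \<le> K"
    and ineq: "AE t in lborel. 0 \<le> t \<longrightarrow> n t \<le> K * (LBINT u:{0..t}. n u)"
  shows "AE t in lborel. 0 \<le> t \<longrightarrow> n t = 0"
proof -
  have on_bounded: "AE t in lborel. 0 \<le> t \<and> t \<le> T \<longrightarrow> n t = 0" for T
  proof -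
    define M where "M = K * (LBINT u:{0..T}. n u)"
    have iterate: "AE t in lborel. 0 \<le> t \<and> t \<le> T \<longrightarrow> n t \<le> M * (K * t) ^ k / fact k" for k
    proof (induction k)
      case 0
      have "n t \<le> M" if "0 \<le> t" "t \<le> T" "n t \<le> K * (LBINT u:{0..t}. n u)" for t
      proof -
        have "(LBINT u:{0..t}. n u) \<le> (LBINT u:{0..T}. n u)"
          using that by (intro set_integral_mono_subset[OF int]) (auto simp: nonneg)
        then show ?thesis using that K unfolding M_def by (meson mult_left_mono order_trans)
      qed
      then show ?case using ineq by (auto elim!: eventually_mono)
    next
      case (Suc k)
      have integral_bound: "(LBINT u:{0..t}. n u) \<le> M * K ^ k / fact k * (t ^ Suc k / Suc k)"
        if t: "0 \<le> t" "t \<le> T" for t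
      proof -
        have "(LBINT u:{0..t}. n u) \<le> (LBINT u:{0..t}. M * K ^ k / fact k * u ^ k)"
        proof (rule set_integral_mono_AE)
          show "set_integrable lborel {0..t} (\<lambda>u. M * K ^ k / fact k * u ^ k)"
            by (intro borel_integrable_atLeastAtMost' continuous_intros)
          show "AE u\<in>{0..t} in lborel. n u \<le> M * K ^ k / fact k * u ^ k"
            using Suc.IH t by (auto elim!: eventually_mono simp: power_mult_distrib)
        qed (rule int)
        also have "\<dots> = M * K ^ k / fact k * (t ^ Suc k / Suc k)"
          using integral_power[OF t(1), of k] by (simp add: set_lebesgue_integral_def mult.commute)
        finally show ?thesis .
      qed
      have "n t \<le> M * (K * t) ^ Suc k / fact (Suc k)"
        if "0 \<le> t" "t \<le> T" "n t \<le> K * (LBINT u:{0..t}. n u)" for t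
      proof -
        have "n t \<le> K * (M * K ^ k / fact k * (t ^ Suc k / Suc k))"
          using integral_bound[OF that(1,2)] that(3) K by (meson mult_left_mono order_trans)
        also have "\<dots> = M * (K * t) ^ Suc k / fact (Suc k)"
          by (simp add: power_mult_distrib field_simps)
        finally show ?thesis .
      qed
      then show ?case using ineq by (auto elim!: eventually_mono)
    qed
    then have "AE t in lborel. \<forall>k. 0 \<le> t \<and> t \<le> T \<longrightarrow> n t \<le> M * (K * t) ^ k / fact k"
      unfolding AE_all_countable by blast
    then show ?thesis
    proof (rule eventually_mono, intro impI)
      fix t assume bounds: "\<forall>k. 0 \<le> t \<and> t \<le> T \<longrightarrow> n t \<le> M * (K * t) ^ k / fact k"
        and t: "0 \<le> t \<and> t \<le> T"
      have "(\<lambda>k. (K * t) ^ k / fact k) \<longlonglongrightarrow> 0"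
        using summable_LIMSEQ_zero[OF summable_exp[of "K * t"]] by (simp add: divide_inverse mult.commute)
      then have "(\<lambda>k. M * ((K * t) ^ k / fact k)) \<longlonglongrightarrow> M * 0"
        by (intro tendsto_mult tendsto_const)
      then have "n t \<le> M * 0"
        using bounds t by (intro LIMSEQ_le_const) auto
      then show "n t = 0" using nonneg[of t] by simp
    qed
  qed
  have "AE t in lborel. \<forall>m::nat. 0 \<le> t \<and> t \<le> real m \<longrightarrow> n t = 0"
    unfolding AE_all_countable using on_bounded by blast
  then show ?thesis
    by (rule eventually_mono) (meson real_arch_simple order_trans)
qed

section \<open>The habit operator\<close>

lemma habit_split:
  assumes c0: "set_integrable lborel {-\<tau>..<0} c0" and c: "L1loc c" and t: "0 \<le> t" and \<eta>: "0 \<le> \<eta>"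
  shows "habit \<epsilon> \<eta> \<tau> c0 c t = \<epsilon> * (LBINT u:{t-\<tau>..<0}. c0 u * exp (\<eta> * (u - t)))
                                 + \<epsilon> * (LBINT u:{max 0 (t-\<tau>)..t}. c u * exp (\<eta> * (u - t)))"
proof -
  have window: "{t-\<tau>..t} = {t-\<tau>..<0} \<union> {max 0 (t-\<tau>)..t}" using t by auto
  have "set_integrable lborel {t-\<tau>..<0} (\<lambda>u. c0 u * exp (\<eta> * (u - t)))"
    by (rule set_integrable_mult_exp_decay[OF set_integrable_subset[OF c0]]) (use t \<eta> in auto)
  then have init: "set_integrable lborel {t-\<tau>..<0} (\<lambda>u. concat c0 c u * exp (\<eta> * (u - t)))"
    by (rule set_integrable_cong[THEN iffD1, rotated -1]) (auto simp: concat_def)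
  have "set_integrable lborel {max 0 (t-\<tau>)..t} (\<lambda>u. c u * exp (\<eta> * (u - t)))"
    by (rule set_integrable_mult_exp_decay[OF L1loc_set_integrable[OF c]]) (use \<eta> in auto)
  then have own: "set_integrable lborel {max 0 (t-\<tau>)..t} (\<lambda>u. concat c0 c u * exp (\<eta> * (u - t)))"
    by (rule set_integrable_cong[THEN iffD1, rotated -1]) (auto simp: concat_def)
  have "(LBINT u:{t-\<tau>..t}. concat c0 c u * exp (\<eta> * (u - t)))
      = (LBINT u:{t-\<tau>..<0}. concat c0 c u * exp (\<eta> * (u - t)))
        + (LBINT u:{max 0 (t-\<tau>)..t}. concat c0 c u * exp (\<eta> * (u - t)))"
    unfolding window by (rule set_integral_Un[OF _ init own]) auto
  also have "\<dots> = (LBINT u:{t-\<tau>..<0}. c0 u * exp (\<eta> * (u - t)))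
                + (LBINT u:{max 0 (t-\<tau>)..t}. c u * exp (\<eta> * (u - t)))"
    by (intro arg_cong2[where f="(+)"] set_lebesgue_integral_cong) (auto simp: concat_def)
  finally show ?thesis unfolding habit_def by (simp add: distrib_left)
qed

lemma habit_diff:
  assumes c0: "set_integrable lborel {-\<tau>..<0} c0" and f: "L1loc f" and g: "L1loc g"
    and t: "0 \<le> t" and \<eta>: "0 \<le> \<eta>"
  shows "habit \<epsilon> \<eta> \<tau> c0 f t - habit \<epsilon> \<eta> \<tau> c0 g t
       = \<epsilon> * (LBINT u:{max 0 (t-\<tau>)..t}. (f u - g u) * exp (\<eta> * (u - t)))"
proof -
  have "set_integrable lborel {max 0 (t-\<tau>)..t} (\<lambda>u. h u * exp (\<eta> * (u - t)))"
    if "L1loc h" for h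
    by (rule set_integrable_mult_exp_decay[OF L1loc_set_integrable[OF that]]) (use \<eta> in auto)
  then have "(LBINT u:{max 0 (t-\<tau>)..t}. (f u - g u) * exp (\<eta> * (u - t)))
      = (LBINT u:{max 0 (t-\<tau>)..t}. f u * exp (\<eta> * (u - t)))
        - (LBINT u:{max 0 (t-\<tau>)..t}. g u * exp (\<eta> * (u - t)))"
    using f g by (simp add: left_diff_distrib)
  then show ?thesis
    unfolding habit_split[OF c0 f t \<eta>] habit_split[OF c0 g t \<eta>] by (simp add: right_diff_distrib)
qed

lemma habit_nonneg:
  assumes "AE u in lborel. u \<in> {-\<tau>..<0} \<longrightarrow> 0 \<le> c0 u" "AE u in lborel. 0 \<le> u \<longrightarrow> 0 \<le> c u"
    and "0 \<le> t" "0 \<le> \<epsilon>"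
  shows "0 \<le> habit \<epsilon> \<eta> \<tau> c0 c t"
proof -
  have "AE u in lborel. u \<in> {t-\<tau>..t} \<longrightarrow> 0 \<le> concat c0 c u * exp (\<eta> * (u - t))"
    using assms(1,2) by eventually_elim (use \<open>0 \<le> t\<close> in \<open>auto simp: concat_def\<close>)
  then show ?thesis
    unfolding habit_def using \<open>0 \<le> \<epsilon>\<close> by (intro mult_nonneg_nonneg set_integral_nonneg_AE)
qed

lemma habit_comparison:
  fixes f g :: "real \<Rightarrow> real"
  assumes c0: "set_integrable lborel {-\<tau>..<0} c0" and f: "L1loc f" and g: "L1loc g"
    and \<epsilon>: "0 \<le> \<epsilon>" and \<eta>: "0 \<le> \<eta>"
    and compare: "AE t in lborel. 0 \<le> t \<longrightarrow>
       f t \<le> g t \<or> f t - g t \<le> habit \<epsilon> \<eta> \<tau> c0 f t - habit \<epsilon> \<eta> \<tau> c0 g t"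
  shows "AE t in lborel. 0 \<le> t \<longrightarrow> f t \<le> g t"
proof -
  define n where "n = (\<lambda>t. max 0 (f t - g t))"
  have n_int: "set_integrable lborel {0..T} n" for T
    unfolding n_def by (intro set_integrable_max_zero set_integral_diff(1) L1loc_set_integrable f g) auto
  have habit_gap: "habit \<epsilon> \<eta> \<tau> c0 f t - habit \<epsilon> \<eta> \<tau> c0 g t \<le> \<epsilon> * (LBINT u:{0..t}. n u)"
    if t: "0 \<le> t" for t
  proof -
    let ?W = "{max 0 (t-\<tau>)..t}"
    have "(LBINT u:?W. (f u - g u) * exp (\<eta> * (u - t))) \<le> (LBINT u:?W. n u)"
    proof (rule set_integral_mono)
      show "set_integrable lborel ?W (\<lambda>u. (f u - g u) * exp (\<eta> * (u - t)))"
        using \<eta> by (intro set_integrable_mult_exp_decay set_integral_diff(1) L1loc_set_integrable f g) auto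
      show "set_integrable lborel ?W n"
        using n_int[of t] by (rule set_integrable_subset) auto
      fix u assume "u \<in> ?W"
      then have "exp (\<eta> * (u - t)) \<le> 1" using \<eta> by (simp add: mult_nonneg_nonpos)
      then show "(f u - g u) * exp (\<eta> * (u - t)) \<le> n u"
        unfolding n_def by (cases "0 \<le> f u - g u") (auto simp: mult_left_le mult_nonpos_nonneg)
    qed
    also have "\<dots> \<le> (LBINT u:{0..t}. n u)"
      by (rule set_integral_mono_subset[OF n_int]) (auto simp: n_def)
    finally show ?thesis
      unfolding habit_diff[OF c0 f g t \<eta>] using \<epsilon> by (rule mult_left_mono)
  qed
  have "AE t in lborel. 0 \<le> t \<longrightarrow> n t = 0"
  proof (rule gronwall_AE_zero[OF _ n_int \<epsilon>])
    show "AE t in lborel. 0 \<le> t \<longrightarrow> n t \<le> \<epsilon> * (LBINT u:{0..t}. n u)"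
      using compare
    proof (rule eventually_mono, intro impI)
      fix t assume "0 \<le> t \<longrightarrow> f t \<le> g t \<or> f t - g t \<le> habit \<epsilon> \<eta> \<tau> c0 f t - habit \<epsilon> \<eta> \<tau> c0 g t"
        and t: "0 \<le> t"
      moreover have "0 \<le> \<epsilon> * (LBINT u:{0..t}. n u)"
        using \<epsilon> by (intro mult_nonneg_nonneg set_integral_nonneg_AE) (simp_all add: n_def)
      ultimately show "n t \<le> \<epsilon> * (LBINT u:{0..t}. n u)"
        using habit_gap[OF t] by (auto simp: n_def)
    qed
  qed (simp add: n_def)
  then show ?thesis by (rule eventually_mono) (auto simp: n_def)
qed

section \<open>The maintenance path\<close>

lemma is_cm_nonneg:
  assumes c0: "L1_nonneg_init \<tau> c0" and cm: "is_cm \<epsilon> \<eta> \<tau> c0 cm"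
    and \<epsilon>: "0 \<le> \<epsilon>" and \<eta>: "0 \<le> \<eta>"
  shows "AE t in lborel. 0 \<le> t \<longrightarrow> 0 \<le> cm t"
proof (rule habit_comparison[where f = "\<lambda>_. 0", OF _ _ _ \<epsilon> \<eta>])
  show "set_integrable lborel {-\<tau>..<0} c0" "L1loc cm"
    using c0 cm by (simp_all add: L1_nonneg_init_def is_cm_def)
  show "L1loc (\<lambda>_. 0)" by (simp add: L1loc_def set_integrable_def)
  have "0 \<le> habit \<epsilon> \<eta> \<tau> c0 (\<lambda>_. 0) t" if "0 \<le> t" for t
    using c0 that \<epsilon> by (intro habit_nonneg) (auto simp: L1_nonneg_init_def)
  then show "AE t in lborel. 0 \<le> t \<longrightarrow>
      0 \<le> cm t \<or> 0 - cm t \<le> habit \<epsilon> \<eta> \<tau> c0 (\<lambda>_. 0) t - habit \<epsilon> \<eta> \<tau> c0 cm t"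
    using cm by (auto simp: is_cm_def)
qed

lemma is_cm_le_admissible:
  assumes c0: "L1_nonneg_init \<tau> c0" and cm: "is_cm \<epsilon> \<eta> \<tau> c0 cm"
    and \<epsilon>: "0 \<le> \<epsilon>" and \<eta>: "0 \<le> \<eta>" and c: "c \<in> admissible A \<delta> \<epsilon> \<eta> \<tau> k0 c0"
  shows "AE t in lborel. 0 \<le> t \<longrightarrow> cm t \<le> c t"
proof (rule habit_comparison[OF _ _ _ \<epsilon> \<eta>])
  show "set_integrable lborel {-\<tau>..<0} c0" "L1loc cm" "L1loc c"
    using c0 cm c by (simp_all add: L1_nonneg_init_def is_cm_def admissible_def L1loc_nonneg_def)
  have "AE t in lborel. 0 \<le> t \<longrightarrow> habit \<epsilon> \<eta> \<tau> c0 c t \<le> c t"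
    using c by (auto simp: admissible_def elim!: eventually_mono)
  then show "AE t in lborel. 0 \<le> t \<longrightarrow>
      cm t \<le> c t \<or> cm t - c t \<le> habit \<epsilon> \<eta> \<tau> c0 cm t - habit \<epsilon> \<eta> \<tau> c0 c t"
    using cm by (auto simp: is_cm_def elim!: eventually_mono)
qed

lemma capital_antimono:
  assumes "L1loc c1" "L1loc c2" "AE u in lborel. 0 \<le> u \<longrightarrow> c1 u \<le> c2 u"
  shows "capital A \<delta> k0 c2 t \<le> capital A \<delta> k0 c1 t"
proof -
  have "set_integrable lborel {0..t} (\<lambda>u. exp ((A - \<delta>) * (t - u)) * c u)" if "L1loc c" for c
  proof -
    have "compact ((\<lambda>u. exp ((A - \<delta>) * (t - u))) ` {0..t})"
      by (intro compact_continuous_image continuous_intros) simp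
    then obtain B where "\<And>u. u \<in> {0..t} \<Longrightarrow> \<bar>exp ((A - \<delta>) * (t - u))\<bar> \<le> B"
      by (meson bounded_real compact_imp_bounded imageI)
    then have "set_integrable lborel {0..t} (\<lambda>u. c u * exp ((A - \<delta>) * (t - u)))"
      by (intro set_integrable_mult_bounded L1loc_set_integrable that) auto
    then show ?thesis by (simp add: mult.commute)
  qed
  then have "(LBINT u:{0..t}. exp ((A - \<delta>) * (t - u)) * c1 u) \<le> (LBINT u:{0..t}. exp ((A - \<delta>) * (t - u)) * c2 u)"
    using assms by (intro set_integral_mono_AE) (auto elim!: eventually_mono)
  then show ?thesis unfolding capital_def by simp
qed

lemma kM_eq_capital: "kM A \<delta> k0 cm t = capital A \<delta> k0 cm t"
proof -
  have "exp ((A - \<delta>) * (t - u)) = exp ((A - \<delta>) * t) * exp (- (A - \<delta>) * u)" for u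
    by (simp add: mult_exp_exp algebra_simps)
  then have factor: "exp ((A - \<delta>) * (t - u)) * cm u = exp ((A - \<delta>) * t) * (cm u * exp (- (A - \<delta>) * u))" for u
    by (simp add: ac_simps)
  have "(LBINT u:{0..t}. exp ((A - \<delta>) * (t - u)) * cm u)
      = exp ((A - \<delta>) * t) * (LBINT u:{0..t}. cm u * exp (- (A - \<delta>) * u))"
    unfolding factor by (rule set_integral_mult_right)
  then show ?thesis unfolding kM_def capital_def by (simp add: algebra_simps)
qed

lemma is_cm_admissible_iff:
  assumes c0: "L1_nonneg_init \<tau> c0" and cm: "is_cm \<epsilon> \<eta> \<tau> c0 cm"
    and \<epsilon>: "0 \<le> \<epsilon>" and \<eta>: "0 \<le> \<eta>"
  shows "cm \<in> admissible A \<delta> \<epsilon> \<eta> \<tau> k0 c0 \<longleftrightarrow> (\<forall>t\<ge>0. kM A \<delta> k0 cm t \<ge> 0)"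
proof -
  have nonneg: "AE t in lborel. 0 \<le> t \<longrightarrow> 0 \<le> cm t"
    by (rule is_cm_nonneg[OF c0 cm \<epsilon> \<eta>])
  then have "AE t in lborel. 0 \<le> t \<longrightarrow>
      habit \<epsilon> \<eta> \<tau> c0 cm t \<le> cm t \<and> 0 \<le> habit \<epsilon> \<eta> \<tau> c0 cm t"
    using cm by (auto simp: is_cm_def elim!: eventually_mono)
  then show ?thesis
    using cm nonneg by (simp add: admissible_def L1loc_nonneg_def is_cm_def kM_eq_capital)
qed

lemma admissible_nonempty_iff:
  assumes c0: "L1_nonneg_init \<tau> c0" and cm: "is_cm \<epsilon> \<eta> \<tau> c0 cm"
    and \<epsilon>: "0 \<le> \<epsilon>" and \<eta>: "0 \<le> \<eta>"
  shows "admissible A \<delta> \<epsilon> \<eta> \<tau> k0 c0 \<noteq> {} \<longleftrightarrow> cm \<in> admissible A \<delta> \<epsilon> \<eta> \<tau> k0 c0"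
proof
  assume "admissible A \<delta> \<epsilon> \<eta> \<tau> k0 c0 \<noteq> {}"
  then obtain c where c: "c \<in> admissible A \<delta> \<epsilon> \<eta> \<tau> k0 c0" by blast
  have "capital A \<delta> k0 c t \<le> capital A \<delta> k0 cm t" for t
    using cm c is_cm_le_admissible[OF c0 cm \<epsilon> \<eta> c]
    by (intro capital_antimono) (simp_all add: is_cm_def admissible_def L1loc_nonneg_def)
  then have "\<forall>t\<ge>0. kM A \<delta> k0 cm t \<ge> 0"
    using c by (auto simp: admissible_def kM_eq_capital intro: order_trans)
  then show "cm \<in> admissible A \<delta> \<epsilon> \<eta> \<tau> k0 c0"
    using is_cm_admissible_iff[OF c0 cm \<epsilon> \<eta>] by blast
qed blast

section \<open>The characteristic root\<close>

definition exp_window_integral :: "real \<Rightarrow> real \<Rightarrow> real" where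
  "exp_window_integral \<tau> x = (if x = 0 then \<tau> else (1 - exp (- x * \<tau>)) / x)"

lemma LBINT_exp_window:
  fixes \<tau> x :: real
  assumes "0 \<le> \<tau>"
  shows "(LBINT u:{-\<tau>..0}. exp (x * u)) = exp_window_integral \<tau> x"
proof (cases "x = 0")
  case True
  then show ?thesis using assms by (simp add: exp_window_integral_def set_integral_const)
next
  case False
  have "(\<integral>u. exp (x * u) * indicator {-\<tau>..0} u \<partial>lborel) = exp (x * 0) / x - exp (x * - \<tau>) / x"
    using assms False by (intro integral_FTC_Icc_real) (auto intro!: derivative_eq_intros)
  then show ?thesis
    using False by (simp add: exp_window_integral_def set_lebesgue_integral_def mult.commute diff_divide_distrib)
qed

lemma continuous_on_exp_window_integral: "continuous_on UNIV (exp_window_integral \<tau>)"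
proof -
  have "isCont (exp_window_integral \<tau>) x" for x
  proof (cases "x = 0")
    case True
    have "((\<lambda>y. - exp (- y * \<tau>)) has_field_derivative \<tau>) (at 0)"
      by (auto intro!: derivative_eq_intros)
    then have "((\<lambda>y. (- exp (- y * \<tau>) - - exp (- 0 * \<tau>)) / (y - 0)) \<longlongrightarrow> \<tau>) (at 0)"
      unfolding has_field_derivative_iff .
    moreover have "\<forall>\<^sub>F y in at 0. (- exp (- y * \<tau>) - - exp (- 0 * \<tau>)) / (y - 0) = exp_window_integral \<tau> y"
      unfolding eventually_at_filter by (auto simp: exp_window_integral_def)
    ultimately have "(exp_window_integral \<tau> \<longlongrightarrow> \<tau>) (at 0)" by (rule Lim_transform_eventually)
    then show ?thesis using True by (simp add: isCont_def exp_window_integral_def)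
  next
    case False
    have "\<forall>\<^sub>F y in nhds x. (1 - exp (- y * \<tau>)) / y = exp_window_integral \<tau> y"
      using t1_space_nhds[OF False] by (rule eventually_mono) (simp add: exp_window_integral_def)
    moreover have "isCont (\<lambda>y. (1 - exp (- y * \<tau>)) / y) x"
      using False by (intro continuous_intros) auto
    ultimately show ?thesis
      using isCont_cong[of "\<lambda>y. (1 - exp (- y * \<tau>)) / y" "exp_window_integral \<tau>" x] by blast
  qed
  then show ?thesis by (simp add: continuous_at_imp_continuous_on)
qed

lemma LBINT_exp_window_strict_antimono:
  fixes x1 x2 \<tau> :: real
  assumes "0 < \<tau>" "x1 < x2"
  shows "(LBINT u:{-\<tau>..0}. exp (x2 * u)) < (LBINT u:{-\<tau>..0}. exp (x1 * u))"
proof -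
  have int: "set_integrable lborel {-\<tau>..0} (\<lambda>u. exp (x * u))" for x
    by (intro borel_integrable_atLeastAtMost' continuous_intros)
  have "{-\<tau>..<0} \<subseteq> {u \<in> {-\<tau>..0}. 0 < exp (x1 * u) - exp (x2 * u)}"
    using assms by auto
  then have "emeasure lborel {-\<tau>..<0} \<le> emeasure lborel {u \<in> {-\<tau>..0}. 0 < exp (x1 * u) - exp (x2 * u)}"
    by (intro emeasure_mono) measurable
  then have pos: "0 < emeasure lborel {u \<in> {-\<tau>..0}. 0 < exp (x1 * u) - exp (x2 * u)}"
    using assms(1) by (auto intro: less_le_trans[rotated])
  have "AE u in lborel. u \<in> {-\<tau>..0} \<longrightarrow> 0 \<le> exp (x1 * u) - exp (x2 * u)"
    using assms(2) by (intro AE_I2) (auto intro: mult_right_mono_neg)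
  then have "0 < (LBINT u:{-\<tau>..0}. exp (x1 * u) - exp (x2 * u))"
    using set_integral_diff(1)[OF int int] pos by (intro set_integral_pos)
  then show ?thesis using set_integral_diff(2)[OF int int] by simp
qed

lemma exp_window_integral_surj:
  assumes "0 < \<tau>" "0 < \<epsilon>"
  shows "\<exists>x. exp_window_integral \<tau> x = 1 / \<epsilon>"
proof (cases "\<epsilon> * \<tau> \<ge> 1")
  case True
  have "exp_window_integral \<tau> (2 * \<epsilon>) \<le> 1 / (2 * \<epsilon>)"
    using assms by (simp add: exp_window_integral_def divide_right_mono)
  also have "\<dots> \<le> 1 / \<epsilon>" using assms by (simp add: field_simps)
  finally have "exp_window_integral \<tau> (2 * \<epsilon>) \<le> 1 / \<epsilon>" .
  moreover have "1 / \<epsilon> \<le> exp_window_integral \<tau> 0"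
    using True assms by (simp add: exp_window_integral_def field_simps)
  ultimately show ?thesis
    using IVT2'[of "exp_window_integral \<tau>" "2 * \<epsilon>" "1 / \<epsilon>" 0] assms
    by (auto intro: continuous_on_subset[OF continuous_on_exp_window_integral])
next
  case False
  define y where "y = 4 / (\<epsilon> * \<tau>\<^sup>2)"
  have y: "0 < y" using assms by (simp add: y_def)
  \<comment> \<open>this \<open>y\<close> works because \<open>exp z \<ge> (1 + z/2)\<^sup>2\<close> for \<open>z \<ge> 0\<close>\<close>
  have "(1 + y * \<tau> / 2) ^ 2 \<le> exp (y * \<tau> / 2) ^ 2"
    using y assms by (intro power_mono) auto
  then have "1 + y * \<tau> + (y * \<tau>)\<^sup>2 / 4 \<le> exp (y * \<tau>)"
    by (simp add: power2_eq_square mult_exp_exp field_simps)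
  then have "(y * \<tau> + (y * \<tau>)\<^sup>2 / 4) / y \<le> (exp (y * \<tau>) - 1) / y"
    using y by (intro divide_right_mono) auto
  moreover have "(y * \<tau> + (y * \<tau>)\<^sup>2 / 4) / y = \<tau> + 1 / \<epsilon>"
    using y assms by (simp add: y_def field_simps power2_eq_square)
  moreover have "exp_window_integral \<tau> (- y) = (exp (y * \<tau>) - 1) / y"
    using y by (simp add: exp_window_integral_def field_simps)
  ultimately have "1 / \<epsilon> \<le> exp_window_integral \<tau> (- y)"
    using assms by simp
  moreover have "exp_window_integral \<tau> 0 \<le> 1 / \<epsilon>"
    using False assms by (simp add: exp_window_integral_def field_simps)
  ultimately show ?thesis
    using IVT2'[of "exp_window_integral \<tau>" 0 "1 / \<epsilon>" "- y"] y
    by (auto intro: continuous_on_subset[OF continuous_on_exp_window_integral])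
qed

lemma lambda0_root:
  assumes "0 < \<tau>" "0 < \<epsilon>"
  shows "1 = \<epsilon> * (LBINT u:{-\<tau>..0}. exp ((lambda0 \<epsilon> \<eta> \<tau> + \<eta>) * u))"
proof -
  obtain x where "exp_window_integral \<tau> x = 1 / \<epsilon>"
    using exp_window_integral_surj[OF assms] by blast
  then have root: "1 = \<epsilon> * (LBINT u:{-\<tau>..0}. exp ((x - \<eta> + \<eta>) * u))"
    using assms LBINT_exp_window[of \<tau> x] by simp
  have "l = x - \<eta>" if "1 = \<epsilon> * (LBINT u:{-\<tau>..0}. exp ((l + \<eta>) * u))" for l
  proof (rule ccontr)
    have "\<epsilon> * (LBINT u:{-\<tau>..0}. exp ((l + \<eta>) * u)) = \<epsilon> * (LBINT u:{-\<tau>..0}. exp (x * u))"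
      using that root by simp
    then have same: "(LBINT u:{-\<tau>..0}. exp ((l + \<eta>) * u)) = (LBINT u:{-\<tau>..0}. exp (x * u))"
      using assms(2) by simp
    assume "l \<noteq> x - \<eta>"
    then consider "l + \<eta> < x" | "x < l + \<eta>" by linarith
    then show False
      using same LBINT_exp_window_strict_antimono[OF assms(1)] by cases fastforce+
  qed
  with root have "\<exists>!l. 1 = \<epsilon> * (LBINT u:{-\<tau>..0}. exp ((l + \<eta>) * u))" by blast
  then show ?thesis unfolding lambda0_def by (rule theI')
qed

section \<open>Exponential growth of admissible consumption\<close>

lemma habit_exp_solution:
  assumes root: "1 = \<epsilon> * (LBINT u:{-\<tau>..0}. exp ((l + \<eta>) * u))" and t: "\<tau> \<le> t"
  shows "habit \<epsilon> \<eta> \<tau> c0 (\<lambda>u. a * exp (l * u)) t = a * exp (l * t)"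
proof -
  have "exp (l * u) * exp (\<eta> * (u - t)) = exp (l * t) * exp ((l + \<eta>) * (u - t))" for u
    by (simp add: mult_exp_exp algebra_simps)
  then have "(LBINT u:{t-\<tau>..t}. concat c0 (\<lambda>u. a * exp (l * u)) u * exp (\<eta> * (u - t)))
      = (LBINT u:{t-\<tau>..t}. a * exp (l * t) * exp ((l + \<eta>) * (u - t)))"
    using t by (intro set_lebesgue_integral_cong) (auto simp: concat_def)
  also have "\<dots> = a * exp (l * t) * (LBINT u:{t-\<tau>..t}. exp ((l + \<eta>) * (u - t)))"
    by (rule set_integral_mult_right)
  also have "(LBINT u:{t-\<tau>..t}. exp ((l + \<eta>) * (u - t))) = (LBINT u:{-\<tau>..0}. exp ((l + \<eta>) * u))"
    using lborel_integral_real_affine[where c = 1 and t = t,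
        of "\<lambda>u. indicator {t-\<tau>..t} u *\<^sub>R exp ((l + \<eta>) * (u - t))"]
    unfolding set_lebesgue_integral_def
    by (auto intro!: Bochner_Integration.integral_cong split: split_indicator)
  finally show ?thesis using root unfolding habit_def by (simp add: ac_simps)
qed

lemma habit_lower_bound:
  assumes c0: "L1_nonneg_init \<tau> c0" and c: "L1loc_nonneg c"
    and t: "0 \<le> t" "t \<le> \<tau>" and \<epsilon>: "0 \<le> \<epsilon>" and \<eta>: "0 \<le> \<eta>"
  shows "\<epsilon> * exp (- \<eta> * \<tau>) * ((LBINT u:{t-\<tau>..<0}. c0 u) + (LBINT u:{0..t}. c u))
    \<le> habit \<epsilon> \<eta> \<tau> c0 c t"
proof -
  have c0_int: "set_integrable lborel {-\<tau>..<0} c0" and c_int: "L1loc c"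
    using c0 c by (simp_all add: L1_nonneg_init_def L1loc_nonneg_def)
  have "exp (- \<eta> * \<tau>) * (LBINT u:{t-\<tau>..<0}. c0 u) \<le> (LBINT u:{t-\<tau>..<0}. c0 u * exp (\<eta> * (u - t)))"
    using c0 t \<eta> by (intro set_integral_mult_exp_lower set_integrable_subset[OF c0_int])
      (auto simp: L1_nonneg_init_def elim!: eventually_mono)
  moreover have "exp (- \<eta> * \<tau>) * (LBINT u:{0..t}. c u) \<le> (LBINT u:{0..t}. c u * exp (\<eta> * (u - t)))"
    using c t \<eta> by (intro set_integral_mult_exp_lower L1loc_set_integrable[OF c_int])
      (auto simp: L1loc_nonneg_def elim!: eventually_mono)
  ultimately show ?thesis
    unfolding habit_split[OF c0_int c_int t(1) \<eta>] using t \<epsilon>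
    by (simp add: distrib_left mult.assoc add_mono mult_left_mono)
qed

lemma initial_mass_near_zero:
  assumes c0: "L1_nonneg_init \<tau> c0" and pos: "emeasure lborel {u \<in> {-\<tau>..<0}. c0 u > 0} > 0"
  shows "\<exists>s0. -\<tau> < s0 \<and> s0 < 0 \<and> 0 < (LBINT u:{s0..<0}. c0 u)"
proof -
  obtain s0 where s0: "-\<tau> < s0" and "0 < emeasure lborel ({u \<in> {-\<tau>..<0}. c0 u > 0} \<inter> {s0..})"
    using emeasure_pos_inter_atLeast[OF _ pos] by auto
  moreover have "{u \<in> {-\<tau>..<0}. c0 u > 0} \<inter> {s0..} = {u \<in> {s0..<0}. c0 u > 0}"
    using s0 by auto
  ultimately have mass: "0 < emeasure lborel {u \<in> {s0..<0}. c0 u > 0}" by simp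
  then have "s0 < 0" by (cases "s0 < 0") auto
  moreover have "0 < (LBINT u:{s0..<0}. c0 u)"
  proof (rule set_integral_pos[OF _ _ mass])
    have "set_integrable lborel {-\<tau>..<0} c0" using c0 by (simp add: L1_nonneg_init_def)
    then show "set_integrable lborel {s0..<0} c0"
      by (rule set_integrable_subset) (use s0 in auto)
    have "AE u in lborel. u \<in> {-\<tau>..<0} \<longrightarrow> 0 \<le> c0 u"
      using c0 by (simp add: L1_nonneg_init_def)
    then show "AE u in lborel. u \<in> {s0..<0} \<longrightarrow> 0 \<le> c0 u"
      by (rule eventually_mono) (use s0 in auto)
  qed
  ultimately show ?thesis using s0 by blast
qed

lemma admissible_bounded_below_on_first_window:
  assumes \<epsilon>: "0 < \<epsilon>" and \<eta>: "0 \<le> \<eta>" and c0: "L1_nonneg_init \<tau> c0"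
    and pos: "emeasure lborel {u \<in> {-\<tau>..<0}. c0 u > 0} > 0"
    and c: "c \<in> admissible A \<delta> \<epsilon> \<eta> \<tau> k0 c0"
  shows "\<exists>b>0. AE t in lborel. 0 \<le> t \<and> t \<le> \<tau> \<longrightarrow> b \<le> c t"
proof -
  have c0_int: "set_integrable lborel {-\<tau>..<0} c0"
    and c0_nonneg: "AE u in lborel. u \<in> {-\<tau>..<0} \<longrightarrow> 0 \<le> c0 u"
    using c0 by (simp_all add: L1_nonneg_init_def)
  have c_nonneg: "L1loc_nonneg c" and c_int: "L1loc c"
    using c by (simp_all add: admissible_def L1loc_nonneg_def)
  have habit_le: "AE t in lborel. 0 \<le> t \<longrightarrow> habit \<epsilon> \<eta> \<tau> c0 c t \<le> c t"
    using c by (auto simp: admissible_def elim!: eventually_mono)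
  obtain s0 where s0: "-\<tau> < s0" "s0 < 0" and mass: "0 < (LBINT u:{s0..<0}. c0 u)"
    using initial_mass_near_zero[OF c0 pos] by blast
  define \<beta> where "\<beta> = (LBINT u:{s0..<0}. c0 u)"
  have \<beta>: "0 < \<beta>" using mass by (simp add: \<beta>_def)
  define d where "d = s0 + \<tau>"
  have d: "0 < d" "d < \<tau>" using s0 by (auto simp: d_def)
  define \<kappa> where "\<kappa> = \<epsilon> * exp (- \<eta> * \<tau>)"
  have \<kappa>: "0 < \<kappa>" using \<epsilon> by (simp add: \<kappa>_def)
  have lower: "\<kappa> * ((LBINT u:{t-\<tau>..<0}. c0 u) + (LBINT u:{0..t}. c u)) \<le> c t"
    if "0 \<le> t" "t \<le> \<tau>" "habit \<epsilon> \<eta> \<tau> c0 c t \<le> c t" for t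
    using habit_lower_bound[OF c0 c_nonneg that(1,2) less_imp_le[OF \<epsilon>] \<eta>] that(3)
    unfolding \<kappa>_def by linarith
  have c_int_nonneg: "0 \<le> (LBINT u:{0..t}. c u)" for t
    using c_nonneg by (intro set_integral_nonneg_AE) (auto simp: L1loc_nonneg_def elim!: eventually_mono)
  \<comment> \<open>Up to time \<open>d\<close> the habit still sees the mass \<open>\<beta>\<close> of \<open>c0\<close>; afterwards the consumption
    accumulated on \<open>[0, d]\<close> takes over.\<close>
  have early: "AE t in lborel. 0 \<le> t \<and> t \<le> d \<longrightarrow> \<kappa> * \<beta> \<le> c t"
    using habit_le
  proof (rule eventually_mono, intro impI)
    fix t assume habit_t: "0 \<le> t \<longrightarrow> habit \<epsilon> \<eta> \<tau> c0 c t \<le> c t" and t: "0 \<le> t \<and> t \<le> d"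
    have "\<beta> \<le> (LBINT u:{t-\<tau>..<0}. c0 u)"
      unfolding \<beta>_def using t d c0_nonneg
      by (intro set_integral_mono_subset set_integrable_subset[OF c0_int])
        (auto simp: d_def elim!: eventually_mono)
    then have "\<kappa> * \<beta> \<le> \<kappa> * ((LBINT u:{t-\<tau>..<0}. c0 u) + (LBINT u:{0..t}. c u))"
      using c_int_nonneg[of t] \<kappa> by (intro mult_left_mono) linarith+
    also have "\<dots> \<le> c t" using lower habit_t t d by simp
    finally show "\<kappa> * \<beta> \<le> c t" .
  qed
  have late: "AE t in lborel. d \<le> t \<and> t \<le> \<tau> \<longrightarrow> \<kappa> * (\<kappa> * \<beta> * d) \<le> c t"
    using habit_le
  proof (rule eventually_mono, intro impI)
    fix t assume habit_t: "0 \<le> t \<longrightarrow> habit \<epsilon> \<eta> \<tau> c0 c t \<le> c t" and t: "d \<le> t \<and> t \<le> \<tau>"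
    have "\<kappa> * \<beta> * d = (LBINT u:{0..d}. \<kappa> * \<beta>)"
      using d by (simp add: set_integral_const)
    also have "\<dots> \<le> (LBINT u:{0..d}. c u)"
      using early
      by (intro set_integral_mono_AE borel_integrable_atLeastAtMost' L1loc_set_integrable[OF c_int]
          continuous_intros) (auto elim!: eventually_mono)
    also have "\<dots> \<le> (LBINT u:{0..t}. c u)"
      using t d c_nonneg
      by (intro set_integral_mono_subset L1loc_set_integrable[OF c_int])
        (auto simp: L1loc_nonneg_def elim!: eventually_mono)
    finally have "\<kappa> * \<beta> * d \<le> (LBINT u:{0..t}. c u)" .
    moreover have "0 \<le> (LBINT u:{t-\<tau>..<0}. c0 u)"
      using c0_nonneg t d by (intro set_integral_nonneg_AE) (auto elim!: eventually_mono)
    ultimately have "\<kappa> * (\<kappa> * \<beta> * d) \<le> \<kappa> * ((LBINT u:{t-\<tau>..<0}. c0 u) + (LBINT u:{0..t}. c u))"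
      using \<kappa> by (intro mult_left_mono) linarith+
    also have "\<dots> \<le> c t" using lower habit_t t d by simp
    finally show "\<kappa> * (\<kappa> * \<beta> * d) \<le> c t" .
  qed
  have "AE t in lborel. 0 \<le> t \<and> t \<le> \<tau> \<longrightarrow> min (\<kappa> * \<beta>) (\<kappa> * (\<kappa> * \<beta> * d)) \<le> c t"
    using early late
  proof eventually_elim
    case (elim t)
    then show ?case by (cases "t \<le> d") (simp_all add: min_le_iff_disj)
  qed
  moreover have "0 < min (\<kappa> * \<beta>) (\<kappa> * (\<kappa> * \<beta> * d))"
    using \<kappa> \<beta> d by simp
  ultimately show ?thesis by blast
qed

lemma admissible_exp_lower_bound:
  assumes \<tau>: "0 < \<tau>" and \<epsilon>: "0 < \<epsilon>" and \<eta>: "0 \<le> \<eta>" and c0: "L1_nonneg_init \<tau> c0"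
    and pos: "emeasure lborel {u \<in> {-\<tau>..<0}. c0 u > 0} > 0"
    and c: "c \<in> admissible A \<delta> \<epsilon> \<eta> \<tau> k0 c0"
  shows "\<exists>a>0. AE t in lborel. 0 \<le> t \<longrightarrow> a * exp (lambda0 \<epsilon> \<eta> \<tau> * t) \<le> c t"
proof -
  define l where "l = lambda0 \<epsilon> \<eta> \<tau>"
  obtain b where b: "0 < b" and b_le: "AE t in lborel. 0 \<le> t \<and> t \<le> \<tau> \<longrightarrow> b \<le> c t"
    using admissible_bounded_below_on_first_window[OF \<epsilon> \<eta> c0 pos c] by blast
  define a where "a = b * exp (- \<bar>l\<bar> * \<tau>)"
  have a: "0 < a" using b by (simp add: a_def)
  have a_le_b: "a * exp (l * t) \<le> b" if "0 \<le> t" "t \<le> \<tau>" for t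
  proof -
    have "l * t \<le> \<bar>l\<bar> * t" using that by (simp add: mult_right_mono)
    also have "\<dots> \<le> \<bar>l\<bar> * \<tau>" using that by (simp add: mult_left_mono)
    finally have "l * t \<le> \<bar>l\<bar> * \<tau>" .
    then have "exp (- \<bar>l\<bar> * \<tau>) * exp (l * t) \<le> 1" by (simp add: mult_exp_exp)
    then show ?thesis using b by (simp add: a_def mult.assoc mult_left_le)
  qed
  have "AE t in lborel. 0 \<le> t \<longrightarrow> a * exp (l * t) \<le> c t"
  proof (rule habit_comparison[where f = "\<lambda>t. a * exp (l * t)", OF _ _ _ less_imp_le[OF \<epsilon>] \<eta>])
    show "set_integrable lborel {-\<tau>..<0} c0" using c0 by (simp add: L1_nonneg_init_def)
    show "L1loc c" using c by (simp add: admissible_def L1loc_nonneg_def)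
    show "L1loc (\<lambda>t. a * exp (l * t))"
      unfolding L1loc_def by (intro allI impI borel_integrable_atLeastAtMost' continuous_intros)
    have "AE t in lborel. 0 \<le> t \<longrightarrow> habit \<epsilon> \<eta> \<tau> c0 c t \<le> c t"
      using c by (auto simp: admissible_def elim!: eventually_mono)
    then show "AE t in lborel. 0 \<le> t \<longrightarrow> a * exp (l * t) \<le> c t \<or>
        a * exp (l * t) - c t \<le> habit \<epsilon> \<eta> \<tau> c0 (\<lambda>t. a * exp (l * t)) t - habit \<epsilon> \<eta> \<tau> c0 c t"
      using b_le
    proof eventually_elim
      case (elim t)
      show ?case
      proof (intro impI)
        assume t: "0 \<le> t"
        show "a * exp (l * t) \<le> c t \<or>
          a * exp (l * t) - c t \<le> habit \<epsilon> \<eta> \<tau> c0 (\<lambda>t. a * exp (l * t)) t - habit \<epsilon> \<eta> \<tau> c0 c t"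
        proof (cases "t \<le> \<tau>")
          case True
          then have "a * exp (l * t) \<le> c t" using elim a_le_b[OF t] t by (meson order_trans)
          then show ?thesis ..
        next
          case False
          then have "habit \<epsilon> \<eta> \<tau> c0 (\<lambda>t. a * exp (l * t)) t = a * exp (l * t)"
            unfolding l_def by (intro habit_exp_solution lambda0_root \<tau> \<epsilon>) simp
          then show ?thesis using elim t by simp
        qed
      qed
    qed
  qed
  then show ?thesis using a unfolding l_def by blast
qed

lemma capital_negative_if_exp_lower_bound:
  assumes c: "L1loc c" and a: "0 < a" and k0: "0 \<le> k0"
    and lower: "AE t in lborel. 0 \<le> t \<longrightarrow> a * exp ((A - \<delta>) * t) \<le> c t"
  shows "capital A \<delta> k0 c (k0 / a + 1) < 0"
proof -
  define T where "T = k0 / a + 1"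
  have T: "0 < T" using k0 a by (simp add: T_def add_nonneg_pos)
  have "a * exp ((A - \<delta>) * T) * T = (LBINT u:{0..T}. a * exp ((A - \<delta>) * T))"
    using T by (simp add: set_integral_const)
  also have "\<dots> \<le> (LBINT u:{0..T}. exp ((A - \<delta>) * (T - u)) * c u)"
  proof (rule set_integral_mono_AE)
    show "set_integrable lborel {0..T} (\<lambda>u. a * exp ((A - \<delta>) * T))"
      by (intro borel_integrable_atLeastAtMost' continuous_intros)
    have "set_integrable lborel {0..T} (\<lambda>u. c u * exp ((A - \<delta>) * (T - u)))"
      using L1loc_set_integrable[OF c]
      by (intro set_integrable_mult_bounded[where B = "exp (\<bar>A - \<delta>\<bar> * T)"])
        (auto simp: abs_mult intro: mult_mono)
    then show "set_integrable lborel {0..T} (\<lambda>u. exp ((A - \<delta>) * (T - u)) * c u)"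
      by (simp add: mult.commute)
    have "a * exp ((A - \<delta>) * T) \<le> exp ((A - \<delta>) * (T - u)) * c u"
      if "a * exp ((A - \<delta>) * u) \<le> c u" for u
    proof -
      have "a * exp ((A - \<delta>) * T) = exp ((A - \<delta>) * (T - u)) * (a * exp ((A - \<delta>) * u))"
        by (simp add: mult_exp_exp algebra_simps)
      also have "\<dots> \<le> exp ((A - \<delta>) * (T - u)) * c u"
        using that by (intro mult_left_mono) auto
      finally show ?thesis .
    qed
    then show "AE u\<in>{0..T} in lborel. a * exp ((A - \<delta>) * T) \<le> exp ((A - \<delta>) * (T - u)) * c u"
      using lower by (auto elim!: eventually_mono)
  qed
  finally have "a * exp ((A - \<delta>) * T) * T \<le> (LBINT u:{0..T}. exp ((A - \<delta>) * (T - u)) * c u)" .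
  moreover have "a * exp ((A - \<delta>) * T) * T = (k0 + a) * exp ((A - \<delta>) * T)"
    using a by (simp add: T_def field_simps)
  moreover have "k0 * exp ((A - \<delta>) * T) < (k0 + a) * exp ((A - \<delta>) * T)"
    using a by simp
  ultimately show ?thesis unfolding T_def[symmetric] capital_def by linarith
qed

lemma admissible_empty_if_lambda0_ge:
  assumes \<tau>: "0 < \<tau>" and \<epsilon>: "0 < \<epsilon>" and \<eta>: "0 \<le> \<eta>" and k0: "0 \<le> k0"
    and \<lambda>: "A - \<delta> \<le> lambda0 \<epsilon> \<eta> \<tau>" and c0: "L1_nonneg_init \<tau> c0"
    and pos: "emeasure lborel {u \<in> {-\<tau>..<0}. c0 u > 0} > 0"
  shows "admissible A \<delta> \<epsilon> \<eta> \<tau> k0 c0 = {}"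
proof (rule ccontr)
  assume "admissible A \<delta> \<epsilon> \<eta> \<tau> k0 c0 \<noteq> {}"
  then obtain c where c: "c \<in> admissible A \<delta> \<epsilon> \<eta> \<tau> k0 c0" by blast
  obtain a where a: "0 < a" and lower: "AE t in lborel. 0 \<le> t \<longrightarrow> a * exp (lambda0 \<epsilon> \<eta> \<tau> * t) \<le> c t"
    using admissible_exp_lower_bound[OF \<tau> \<epsilon> \<eta> c0 pos c] by blast
  have "AE t in lborel. 0 \<le> t \<longrightarrow> a * exp ((A - \<delta>) * t) \<le> c t"
    using lower
  proof (rule eventually_mono, intro impI)
    fix t assume "0 \<le> t \<longrightarrow> a * exp (lambda0 \<epsilon> \<eta> \<tau> * t) \<le> c t" and t: "0 \<le> t"
    moreover have "a * exp ((A - \<delta>) * t) \<le> a * exp (lambda0 \<epsilon> \<eta> \<tau> * t)"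
      using a \<lambda> t by (simp add: mult_right_mono)
    ultimately show "a * exp ((A - \<delta>) * t) \<le> c t" by linarith
  qed
  then have "capital A \<delta> k0 c (k0 / a + 1) < 0"
    using c a k0 by (intro capital_negative_if_exp_lower_bound) (simp_all add: admissible_def L1loc_nonneg_def)
  moreover have "\<forall>t\<ge>0. capital A \<delta> k0 c t \<ge> 0" using c by (simp add: admissible_def)
  moreover have "0 \<le> k0 / a + 1" using a k0 by simp
  ultimately show False by fastforce
qed

theorem mainTheorem3:
  fixes A \<delta> \<epsilon> \<eta> \<tau> k0 :: real and c0 cm :: "real \<Rightarrow> real"
  assumes "A > 0" "\<delta> > 0" "\<epsilon> > 0" "\<eta> > 0" "\<tau> > 0"
    and "k0 \<ge> 0"
    and "L1_nonneg_init \<tau> c0"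
    and "is_cm \<epsilon> \<eta> \<tau> c0 cm"
  shows "(admissible A \<delta> \<epsilon> \<eta> \<tau> k0 c0 \<noteq> {} \<longleftrightarrow> cm \<in> admissible A \<delta> \<epsilon> \<eta> \<tau> k0 c0)
       \<and> (admissible A \<delta> \<epsilon> \<eta> \<tau> k0 c0 \<noteq> {} \<longleftrightarrow> (\<forall>t\<ge>0. kM A \<delta> k0 cm t \<ge> 0))
       \<and> (lambda0 \<epsilon> \<eta> \<tau> \<ge> A - \<delta> \<longrightarrow>
            (\<forall>c0'. L1_nonneg_init \<tau> c0' \<and>
                   emeasure lborel {u \<in> {-\<tau>..<0}. c0' u > 0} > 0 \<longrightarrow>
                   admissible A \<delta> \<epsilon> \<eta> \<tau> k0 c0' = {}))"
proof -
  have \<epsilon>: "0 \<le> \<epsilon>" and \<eta>: "0 \<le> \<eta>" using assms by simp_all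
  have "admissible A \<delta> \<epsilon> \<eta> \<tau> k0 c0 \<noteq> {} \<longleftrightarrow> cm \<in> admissible A \<delta> \<epsilon> \<eta> \<tau> k0 c0"
    by (rule admissible_nonempty_iff[OF assms(7,8) \<epsilon> \<eta>])
  moreover have "cm \<in> admissible A \<delta> \<epsilon> \<eta> \<tau> k0 c0 \<longleftrightarrow> (\<forall>t\<ge>0. kM A \<delta> k0 cm t \<ge> 0)"
    by (rule is_cm_admissible_iff[OF assms(7,8) \<epsilon> \<eta>])
  moreover have "admissible A \<delta> \<epsilon> \<eta> \<tau> k0 c0' = {}"
    if "lambda0 \<epsilon> \<eta> \<tau> \<ge> A - \<delta>" "L1_nonneg_init \<tau> c0'"
      "emeasure lborel {u \<in> {-\<tau>..<0}. c0' u > 0} > 0" for c0'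
    using assms that by (intro admissible_empty_if_lambda0_ge) simp_all
  ultimately show ?thesis by blast
qed

end
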